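(* Let $p$ be an odd prime and $G$ a finite $p$-group with cyclic commutator subgroup. Write $|G'|=p^m$ and $|G'\cap \mathrm{Z}(G)|=p^t$. Then ${\rm C}_G(G')=\{g\in G: g^{p^t}\in \mathrm{Z}(G)G'\}$ and ${\rm C}_G(G')'=\mho_{m-t}(G')$. Moreover, for every subgroup $N$ of $G$ contained in ${\rm C}_G(G')$ one has $\exp(N)=p^{\min\{n : {\mathrm D}_{p^n}(N)=1\}}$.
   Context: $\mathrm{Z}(G)$ is the center; $\mho_j(X)=\langle x^{p^j}:x\in X\rangle$. The Jennings series of a finite $p$-group $N$ is ${\mathrm D}_n(N)=\prod_{ip^j\ge n}\mho_j(\gamma_i(N))$, with $\gamma_i$ the lower central series. *)

theory Defs
  imports "HOL-Algebra.Algebra"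
begin

definition center :: "('a, 'b) monoid_scheme \<Rightarrow> 'a set" where
  "center G = {z \<in> carrier G. \<forall>g \<in> carrier G. z \<otimes>\<^bsub>G\<^esub> g = g \<otimes>\<^bsub>G\<^esub> z}"

definition centralizer :: "('a, 'b) monoid_scheme \<Rightarrow> 'a set \<Rightarrow> 'a set" where
  "centralizer G H = {g \<in> carrier G. \<forall>h \<in> H. g \<otimes>\<^bsub>G\<^esub> h = h \<otimes>\<^bsub>G\<^esub> g}"

definition comm_subgroup :: "('a, 'b) monoid_scheme \<Rightarrow> 'a set \<Rightarrow> 'a set \<Rightarrow> 'a set" where
  "comm_subgroup G A B = generate G
     {a \<otimes>\<^bsub>G\<^esub> b \<otimes>\<^bsub>G\<^esub> inv\<^bsub>G\<^esub> a \<otimes>\<^bsub>G\<^esub> inv\<^bsub>G\<^esub> b | a b. a \<in> A \<and> b \<in> B}"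

text \<open>Lower central series of N: gamma_1(N) = N, gamma_(i+1)(N) = [gamma_i(N), N].
  (Index 0 is set to N as well; it is never used below.)\<close>
fun lcs :: "('a, 'b) monoid_scheme \<Rightarrow> 'a set \<Rightarrow> nat \<Rightarrow> 'a set" where
  "lcs G N 0 = N"
| "lcs G N (Suc 0) = N"
| "lcs G N (Suc (Suc i)) = comm_subgroup G (lcs G N (Suc i)) N"

definition mho :: "('a, 'b) monoid_scheme \<Rightarrow> nat \<Rightarrow> nat \<Rightarrow> 'a set \<Rightarrow> 'a set" where
  "mho G p j S = generate G {x [^]\<^bsub>G\<^esub> (p ^ j) | x. x \<in> S}"

definition jennings :: "('a, 'b) monoid_scheme \<Rightarrow> nat \<Rightarrow> 'a set \<Rightarrow> nat \<Rightarrow> 'a set" where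
  "jennings G p N n = generate G (\<Union>{mho G p j (lcs G N i) | i j. 1 \<le> i \<and> n \<le> i * p ^ j})"

definition group_exponent :: "('a, 'b) monoid_scheme \<Rightarrow> 'a set \<Rightarrow> nat" where
  "group_exponent G H = (LEAST e. 0 < e \<and> (\<forall>x \<in> H. x [^]\<^bsub>G\<^esub> e = \<one>\<^bsub>G\<^esub>))"

end

(*
  Write D = G', C = C_G(D) and Z = Z(G). As D is cyclic of order p^m, every h acts on D by a
  power map d |-> d^rho(h); since G is a p-group, rho(h) = 1 (mod p), and C is the kernel of rho.
  If rho is trivial, then D <= Z, t = m and every g^(p^m) is central. Otherwise pick a with
  rho(a) =/= 1 such that the exact power p^s dividing rho(a) - 1 is minimal. As p is odd, lifting
  the exponent shows that the powers of rho(a) modulo p^m are exactly the residues = 1 (mod p^s).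
  Hence G = <a>C, and D /\ Z consists of the d in D with d^(p^s) = 1, which is mho_(m-s)(D) and
  has order p^s; so s = t.
  Commutators of elements of C lie in D /\ Z. If no [a, x] with x in C generated D, then all
  [a^i, x] and [x, y] with x, y in C would lie in the maximal subgroup of D, and so would
  G' = [<a>C, <a>C]. For a generator c = [a, x], the element [a^(p^(m-s)), x] = c^(p^(m-s) w)
  with p not dividing w generates D /\ Z, which gives C' = D /\ Z; and for g = a^i y with y in C
  the condition g^(p^s) in ZD forces [a^i, x]^(p^s) = 1, that is a^i in C.
  For N <= C one has gamma_3(N) = 1 and gamma_2(N) <= D with exponent dividing that of N. Since
  p >= 3, the condition i p^j >= p^n with i <= 2 forces j >= n, so D_(p^n)(N) = 1 exactly when
  the exponent of N divides p^n.
*)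
theory Submission
  imports Defs "HOL-Number_Theory.Number_Theory"
begin

section \<open>Geometric sums and lifting the exponent\<close>

fun geom_sum :: "nat \<Rightarrow> nat \<Rightarrow> nat" where
  "geom_sum q 0 = 0"
| "geom_sum q (Suc n) = 1 + q * geom_sum q n"

lemma geom_sum_add: "geom_sum q (a + b) = geom_sum q a + q ^ a * geom_sum q b"
  by (induction a) (auto simp: algebra_simps)

lemma geom_sum_mult: "geom_sum q (a * b) = geom_sum q a * geom_sum (q ^ a) b"
  by (induction b) (simp_all add: geom_sum_add algebra_simps)

lemma power_minus_one_eq_geom_sum: "q ^ n - 1 = (q - 1) * geom_sum q n"
proof (cases "q = 0")
  case False
  have "int (q ^ n) - 1 = (int q - 1) * int (geom_sum q n)"
  proof (induction n)
    case (Suc n)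
    have "(int q - 1) * int (geom_sum q (Suc n)) = (int q - 1) + int q * ((int q - 1) * int (geom_sum q n))"
      by (simp add: algebra_simps)
    also have "\<dots> = (int q - 1) + int q * (int (q ^ n) - 1)"
      by (simp only: Suc.IH)
    also have "\<dots> = int (q ^ Suc n) - 1"
      by (simp add: algebra_simps)
    finally show ?case ..
  qed simp
  then have "int (q ^ n - 1) = int ((q - 1) * geom_sum q n)"
    using False by (simp add: of_nat_diff)
  then show ?thesis
    by (simp only: of_nat_eq_iff)
qed (simp add: power_0_left)

lemma geom_sum_cong:
  assumes "[q = 1] (mod p)"
  shows "[geom_sum q n = n] (mod p)"
proof (induction n)
  case (Suc n)
  have "[1 + q * geom_sum q n = 1 + 1 * n] (mod p)"
    by (intro cong_add cong_mult assms Suc cong_refl)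
  then show ?case by simp
qed simp

lemma geom_sum_second_order:
  "[geom_sum (1 + p * z) n = n + p * z * (\<Sum>i<n. i)] (mod p\<^sup>2)"
proof (induction n)
  case (Suc n)
  let ?S = "\<Sum>i<n. i"
  have "geom_sum (1 + p * z) (Suc n) = 1 + (1 + p * z) * geom_sum (1 + p * z) n"
    by simp
  also have "[\<dots> = 1 + (1 + p * z) * (n + p * z * ?S)] (mod p\<^sup>2)"
    by (intro cong_add cong_mult cong_refl Suc)
  also have "1 + (1 + p * z) * (n + p * z * ?S) = Suc n + p * z * (?S + n) + p\<^sup>2 * (z\<^sup>2 * ?S)"
    by (simp add: algebra_simps power2_eq_square)
  also have "[\<dots> = Suc n + p * z * (?S + n)] (mod p\<^sup>2)"
    by (simp add: cong_def)
  finally show ?case by simp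
qed simp

lemma geom_sum_prime_exact:
  fixes p q :: nat
  assumes p: "Factorial_Ring.prime p" "odd p" and q: "[q = 1] (mod p)"
  shows "\<exists>w. geom_sum q p = p * w \<and> \<not> p dvd w"
proof -
  have p1: "1 < p" using prime_gt_1_nat[OF p(1)] .
  have "q mod p = 1" using q p1 by (simp add: cong_def)
  then have qz: "q = 1 + p * (q div p)"
    by (metis add.commute div_mult_mod_eq mult.commute)
  obtain k where k: "p = Suc (2 * k)" using p(2) by (metis oddE Suc_eq_plus1)
  have "(\<Sum>i<p. i) = p * k"
    unfolding k lessThan_Suc_atMost atMost_atLeast0 gauss_sum_nat by simp
  then have "[geom_sum q p = p + p\<^sup>2 * (q div p * k)] (mod p\<^sup>2)"
    using geom_sum_second_order[of p "q div p" p] qz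
    by (simp add: power2_eq_square algebra_simps)
  also have "[p + p\<^sup>2 * (q div p * k) = p] (mod p\<^sup>2)"
    by (simp add: cong_def)
  finally have "geom_sum q p mod p\<^sup>2 = p"
    using p1 by (simp add: cong_def power2_eq_square)
  then have "geom_sum q p = p * (p * (geom_sum q p div p\<^sup>2) + 1)"
    by (metis div_mult_mod_eq power2_eq_square mult.assoc mult.commute distrib_left mult_1_right)
  moreover have "\<not> p dvd p * (geom_sum q p div p\<^sup>2) + 1"
    using p1 by (metis dvd_add_right_iff dvd_triv_left nat_dvd_1_iff_1 less_irrefl)
  ultimately show ?thesis by blast
qed

lemma geom_sum_prime_power_exact:
  fixes p q :: nat
  assumes p: "Factorial_Ring.prime p" "odd p" and q: "[q = 1] (mod p)"
  shows "\<exists>w. geom_sum q (p ^ k) = p ^ k * w \<and> \<not> p dvd w"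
proof (induction k)
  case 0
  then show ?case using prime_gt_1_nat[OF p(1)] by (intro exI[of _ 1]) simp
next
  case (Suc k)
  then obtain w1 where w1: "geom_sum q (p ^ k) = p ^ k * w1" "\<not> p dvd w1" by blast
  have "[q ^ p ^ k = 1] (mod p)"
    using cong_pow[OF q] by simp
  then obtain w2 where w2: "geom_sum (q ^ p ^ k) p = p * w2" "\<not> p dvd w2"
    using geom_sum_prime_exact[OF p] by blast
  have "geom_sum q (p ^ Suc k) = p ^ Suc k * (w1 * w2)"
    using geom_sum_mult[of q "p ^ k" p] w1(1) w2(1) by (simp add: algebra_simps)
  with w1(2) w2(2) p(1) show ?case by (metis prime_dvd_mult_iff)
qed

lemma cong_pow_prime_power_self:
  fixes p a :: nat
  assumes p: "Factorial_Ring.prime p"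
  shows "[a ^ p ^ k = a] (mod p)"
proof (induction k)
  case (Suc k)
  have fermat: "[b ^ p = b] (mod p)" for b :: nat
  proof (cases "p dvd b")
    case True
    then have "[b ^ p = 0] (mod p)" and "[b = 0] (mod p)"
      using p by (simp_all add: cong_0_iff) (meson dvd_power dvd_trans prime_gt_0_nat)
    then show ?thesis by (metis cong_sym cong_trans)
  next
    case False
    have "[b * b ^ (p - 1) = b * 1] (mod p)"
      by (rule cong_scalar_left, rule fermat_theorem[OF p False])
    moreover have "b * b ^ (p - 1) = b ^ p"
      using prime_gt_0_nat[OF p] by (simp flip: power_Suc)
    ultimately show ?thesis by simp
  qed
  have "a ^ p ^ Suc k = (a ^ p ^ k) ^ p"
    by (simp only: power_Suc2 power_mult)
  then show ?case
    using cong_trans[OF fermat Suc] by simp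
qed simp

lemma lifting_the_exponent:
  fixes p r s u d :: nat
  assumes p: "Factorial_Ring.prime p" "odd p"
    and r: "r = 1 + p ^ s * u" "\<not> p dvd u" "0 < s" and d: "0 < d"
  shows "\<exists>v. r ^ d - 1 = p ^ (s + multiplicity p d) * v \<and> \<not> p dvd v"
proof -
  define k where "k = multiplicity p d"
  have "d \<noteq> 0" "\<not> is_unit p"
    using d prime_gt_1_nat[OF p(1)] by auto
  then obtain w where dw: "d = p ^ k * w" and w: "\<not> p dvd w"
    unfolding k_def by (rule multiplicity_decompose')
  have r1: "[r = 1] (mod p)"
    unfolding r(1) cong_add_lcancel_0_nat cong_0_iff using r(3) by (intro dvd_mult2 dvd_power) simp
  obtain w1 where w1: "geom_sum r (p ^ k) = p ^ k * w1" "\<not> p dvd w1"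
    using geom_sum_prime_power_exact[OF p r1] by blast
  define R where "R = r ^ p ^ k"
  have R1: "R - 1 = p ^ (s + k) * (u * w1)"
    unfolding R_def power_minus_one_eq_geom_sum w1(1) using r(1) by (simp add: power_add)
  have "[R = 1] (mod p)"
    unfolding R_def using cong_pow[OF r1] by simp
  then have gR: "\<not> p dvd geom_sum R w"
    using w cong_dvd_iff[OF geom_sum_cong] by blast
  have "r ^ d - 1 = R ^ w - 1"
    unfolding R_def dw by (simp add: power_mult)
  also have "\<dots> = p ^ (s + k) * (u * w1 * geom_sum R w)"
    unfolding power_minus_one_eq_geom_sum R1 by simp
  finally show ?thesis
    using r(2) w1(2) gR p(1) unfolding k_def by (metis prime_dvd_mult_iff)
qed

lemma cong_power_one_iff:
  fixes p r s u d m :: nat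
  assumes p: "Factorial_Ring.prime p" "odd p"
    and r: "r = 1 + p ^ s * u" "\<not> p dvd u" "0 < s" and d: "0 < d"
  shows "[r ^ d = 1] (mod p ^ m) \<longleftrightarrow> m \<le> s + multiplicity p d"
proof -
  obtain v where v: "r ^ d - 1 = p ^ (s + multiplicity p d) * v" "\<not> p dvd v"
    using lifting_the_exponent[OF p r d] by blast
  have "coprime (p ^ m) v"
    using v(2) p(1) by (simp add: prime_imp_coprime)
  have "[r ^ d = 1] (mod p ^ m) \<longleftrightarrow> p ^ m dvd r ^ d - 1"
    using r(1) by (simp add: cong_altdef_nat)
  also have "\<dots> \<longleftrightarrow> p ^ m dvd p ^ (s + multiplicity p d)"
    unfolding v(1) using \<open>coprime (p ^ m) v\<close> by (simp add: coprime_dvd_mult_left_iff)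
  also have "\<dots> \<longleftrightarrow> m \<le> s + multiplicity p d"
    using prime_gt_1_nat[OF p(1)] by (auto intro: le_imp_power_dvd dest: power_dvd_imp_le)
  finally show ?thesis .
qed

lemma card_cong_one_less_le:
  fixes b n :: nat
  assumes b: "1 < b"
  shows "card {x. x < b * n \<and> [x = 1] (mod b)} \<le> n"
proof -
  have "{x. x < b * n \<and> [x = 1] (mod b)} \<subseteq> (\<lambda>k. 1 + b * k) ` {..<n}"
  proof
    fix x assume "x \<in> {x. x < b * n \<and> [x = 1] (mod b)}"
    then have x: "x < b * n" "x mod b = 1"
      using b by (simp_all add: cong_def)
    then have "x = 1 + b * (x div b)"
      by (metis add.commute div_mult_mod_eq mult.commute)
    moreover have "x div b < n"
      using x(1) by (simp add: less_mult_imp_div_less mult.commute)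
    ultimately show "x \<in> (\<lambda>k. 1 + b * k) ` {..<n}" by blast
  qed
  then have "card {x. x < b * n \<and> [x = 1] (mod b)} \<le> card ((\<lambda>k. 1 + b * k) ` {..<n})"
    by (intro card_mono) simp_all
  also have "\<dots> \<le> n"
    using card_image_le[of "{..<n}" "\<lambda>k. 1 + b * k"] by simp
  finally show ?thesis .
qed

lemma inj_on_power_mod:
  fixes p r s u m :: nat
  assumes p: "Factorial_Ring.prime p" "odd p"
    and r: "r = 1 + p ^ s * u" "\<not> p dvd u" "0 < s"
  shows "inj_on (\<lambda>i. r ^ i mod p ^ m) {..<p ^ (m - s)}"
proof (rule linorder_inj_onI')
  fix i j assume ij: "i \<in> {..<p ^ (m - s)}" "j \<in> {..<p ^ (m - s)}" "i < j"
  show "r ^ i mod p ^ m \<noteq> r ^ j mod p ^ m"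
  proof
    assume "r ^ i mod p ^ m = r ^ j mod p ^ m"
    then have "[r ^ i * 1 = r ^ i * r ^ (j - i)] (mod p ^ m)"
      using ij(3) by (simp add: cong_def flip: power_add)
    moreover have "[r = 1] (mod p)"
      unfolding r(1) cong_add_lcancel_0_nat cong_0_iff using r(3) by (intro dvd_mult2 dvd_power) simp
    then have "coprime r p"
      by (metis cong_imp_coprime cong_sym coprime_1_left)
    then have "coprime (r ^ i) (p ^ m)"
      by simp
    ultimately have "[1 = r ^ (j - i)] (mod p ^ m)"
      by (simp only: cong_mult_lcancel_nat)
    then have "[r ^ (j - i) = 1] (mod p ^ m)"
      by (rule cong_sym)
    then have "m \<le> s + multiplicity p (j - i)"
      using cong_power_one_iff[OF p r] ij(3) by simp
    then have "p ^ (m - s) dvd j - i"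
      by (intro multiplicity_dvd') simp
    then show False
      using ij by (auto dest: dvd_imp_le)
  qed
qed

lemma power_mod_image:
  fixes p r s u m :: nat
  assumes p: "Factorial_Ring.prime p" "odd p"
    and r: "r = 1 + p ^ s * u" "\<not> p dvd u" "0 < s" and sm: "s \<le> m"
  shows "(\<lambda>i. r ^ i mod p ^ m) ` {..<p ^ (m - s)} = {x. x < p ^ m \<and> [x = 1] (mod p ^ s)}"
proof -
  define n where "n = p ^ (m - s)"
  have p1: "1 < p"
    using prime_gt_1_nat[OF p(1)] .
  have ps: "1 < p ^ s"
    using one_less_power[OF p1 r(3)] .
  have pm: "p ^ m = p ^ s * n"
    unfolding n_def using sm by (simp flip: power_add)
  have "r ^ i mod p ^ m \<in> {x. x < p ^ m \<and> [x = 1] (mod p ^ s)}" for i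
  proof -
    have "[r ^ i mod p ^ m = r ^ i] (mod p ^ s)"
      unfolding cong_def pm by (simp add: mod_mod_cancel)
    also have "[r ^ i = 1 ^ i] (mod p ^ s)"
      unfolding r(1) by (intro cong_pow) (simp only: cong_add_lcancel_0_nat cong_0_iff dvd_triv_left)
    finally show ?thesis
      using p1 by simp
  qed
  then have sub: "(\<lambda>i. r ^ i mod p ^ m) ` {..<n} \<subseteq> {x. x < p ^ m \<and> [x = 1] (mod p ^ s)}"
    by blast
  have "card {x. x < p ^ m \<and> [x = 1] (mod p ^ s)} \<le> n"
    unfolding pm by (rule card_cong_one_less_le[OF ps])
  also have "n = card ((\<lambda>i. r ^ i mod p ^ m) ` {..<n})"
    unfolding n_def by (simp only: card_image[OF inj_on_power_mod[OF p r]] card_lessThan)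
  finally show ?thesis
    unfolding n_def[symmetric] using card_seteq[OF _ sub] by simp
qed

lemma cong_one_is_power:
  fixes p r s u m q :: nat
  assumes p: "Factorial_Ring.prime p" "odd p"
    and r: "r = 1 + p ^ s * u" "\<not> p dvd u" "0 < s" and sm: "s \<le> m"
    and q: "[q = 1] (mod p ^ s)"
  shows "\<exists>i. [r ^ i = q] (mod p ^ m)"
proof -
  have "[q mod p ^ m = q] (mod p ^ s)"
    unfolding cong_def by (rule mod_mod_cancel[OF le_imp_power_dvd[OF sm]])
  then have "q mod p ^ m \<in> {x. x < p ^ m \<and> [x = 1] (mod p ^ s)}"
    using cong_trans[OF _ q] prime_gt_0_nat[OF p(1)] by simp
  then have "q mod p ^ m \<in> (\<lambda>i. r ^ i mod p ^ m) ` {..<p ^ (m - s)}"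
    by (simp only: power_mod_image[OF p r sm])
  then obtain i where "q mod p ^ m = r ^ i mod p ^ m"
    by blast
  then show ?thesis
    unfolding cong_def by (rule exI[of _ i, OF sym])
qed

section \<open>Commutator calculus\<close>

context group
begin

(* the convention of derived_set and comm_subgroup *)
abbreviation commutator :: "'a \<Rightarrow> 'a \<Rightarrow> 'a" where
  "commutator x y \<equiv> x \<otimes> y \<otimes> inv x \<otimes> inv y"

lemma mult_inv_cancel_left [simp]: "x \<in> carrier G \<Longrightarrow> y \<in> carrier G \<Longrightarrow> x \<otimes> (inv x \<otimes> y) = y"
  by (simp flip: m_assoc)

lemma inv_mult_cancel_left [simp]: "x \<in> carrier G \<Longrightarrow> y \<in> carrier G \<Longrightarrow> inv x \<otimes> (x \<otimes> y) = y"
  by (simp flip: m_assoc)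

lemma subgroup_nat_pow_closed: "subgroup H G \<Longrightarrow> h \<in> H \<Longrightarrow> h [^] (k::nat) \<in> H"
  by (induction k) (auto simp: subgroup.one_closed subgroup.m_closed)

lemma nat_pow_eq_nat_pow_iff:
  assumes "x \<in> carrier G"
  shows "x [^] (i::nat) = x [^] j \<longleftrightarrow> [i = j] (mod ord x)"
proof -
  have "x [^] (i::nat) = x [^] j \<longleftrightarrow> x [^] int i = x [^] int j"
    by (simp add: int_pow_int)
  also have "\<dots> \<longleftrightarrow> [int j = int i] (mod int (ord x))"
    using int_pow_eq[OF assms] by (simp add: cong_iff_dvd_diff)
  also have "\<dots> \<longleftrightarrow> [i = j] (mod ord x)"
    by (simp add: cong_int_iff cong_sym_eq)
  finally show ?thesis .
qed

lemma nat_pow_eq_one_of_coprime: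
  assumes x: "x \<in> carrier G" "ord x = p ^ j" and p: "Factorial_Ring.prime p" "\<not> p dvd w"
    and "x [^] (n * w) = \<one>"
  shows "x [^] n = \<one>"
proof -
  have "coprime (p ^ j) w"
    using p by (simp add: prime_imp_coprime)
  then show ?thesis
    using assms(5) x by (simp add: pow_eq_id coprime_dvd_mult_left_iff)
qed

lemma conj_nat_pow:
  assumes "h \<in> carrier G" "x \<in> carrier G"
  shows "(h \<otimes> x \<otimes> inv h) [^] (k::nat) = h \<otimes> x [^] k \<otimes> inv h"
proof (induction k)
  case (Suc k)
  then show ?case
    using assms by (simp add: m_assoc)
qed (simp add: assms m_assoc)

lemma conj_eq_self_iff:
  assumes "h \<in> carrier G" "x \<in> carrier G"
  shows "h \<otimes> x \<otimes> inv h = x \<longleftrightarrow> h \<otimes> x = x \<otimes> h"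
  using assms inv_solve_right'[of x "h \<otimes> x" h] by auto

lemma commutator_eq_one_iff:
  assumes "x \<in> carrier G" "y \<in> carrier G"
  shows "commutator x y = \<one> \<longleftrightarrow> x \<otimes> y = y \<otimes> x"
proof -
  have "commutator x y = (x \<otimes> y) \<otimes> inv (y \<otimes> x)"
    using assms by (simp add: inv_mult_group m_assoc)
  then show ?thesis
    using assms inv_solve_right'[of \<one> "x \<otimes> y" "y \<otimes> x"] by simp
qed

lemma inv_commutator:
  "x \<in> carrier G \<Longrightarrow> y \<in> carrier G \<Longrightarrow> inv (commutator x y) = commutator y x"
  by (simp add: inv_mult_group m_assoc)

lemma commutator_mult_left:
  "g1 \<in> carrier G \<Longrightarrow> g2 \<in> carrier G \<Longrightarrow> x \<in> carrier G \<Longrightarrow>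
   commutator (g1 \<otimes> g2) x = g1 \<otimes> commutator g2 x \<otimes> inv g1 \<otimes> commutator g1 x"
  by (simp add: inv_mult_group m_assoc)

lemma commutator_mult_right:
  "g \<in> carrier G \<Longrightarrow> h1 \<in> carrier G \<Longrightarrow> h2 \<in> carrier G \<Longrightarrow>
   commutator g (h1 \<otimes> h2) = commutator g h1 \<otimes> (h1 \<otimes> commutator g h2 \<otimes> inv h1)"
  by (simp add: inv_mult_group m_assoc)

lemma conj_commutator:
  "h \<in> carrier G \<Longrightarrow> x \<in> carrier G \<Longrightarrow> y \<in> carrier G \<Longrightarrow>
   h \<otimes> commutator x y \<otimes> inv h = commutator (h \<otimes> x \<otimes> inv h) (h \<otimes> y \<otimes> inv h)"
  by (simp add: inv_mult_group m_assoc)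

lemma conj_commutator_eq:
  assumes "h \<in> carrier G" "x \<in> carrier G" "y \<in> carrier G"
    and "h \<otimes> x = x \<otimes> h" "h \<otimes> y = y \<otimes> h"
  shows "h \<otimes> commutator x y \<otimes> inv h = commutator x y"
proof -
  have "h \<otimes> x \<otimes> inv h = x" "h \<otimes> y \<otimes> inv h = y"
    using assms conj_eq_self_iff by blast+
  then show ?thesis
    using conj_commutator[OF assms(1-3)] by simp
qed

lemma commutator_mult_commuting:
  assumes c: "d1 \<in> carrier G" "d2 \<in> carrier G" "x \<in> carrier G" "y \<in> carrier G"
    and "d1 \<otimes> d2 = d2 \<otimes> d1" "d1 \<otimes> x = x \<otimes> d1" "d1 \<otimes> y = y \<otimes> d1"
    and "d2 \<otimes> x = x \<otimes> d2" "d2 \<otimes> y = y \<otimes> d2"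
  shows "commutator (d1 \<otimes> x) (d2 \<otimes> y) = commutator x y"
proof -
  have "d1 \<otimes> (d2 \<otimes> y) = (d2 \<otimes> y) \<otimes> d1"
    using assms by (metis m_assoc)
  then have "commutator d1 (d2 \<otimes> y) = \<one>"
    using assms(1,2,4) by (metis commutator_eq_one_iff m_closed)
  moreover have "commutator x d2 = \<one>"
    using assms by (simp add: commutator_eq_one_iff)
  then have "commutator x (d2 \<otimes> y) = commutator x y"
    using assms by (simp add: commutator_mult_right conj_commutator_eq)
  ultimately show ?thesis
    using assms by (simp add: commutator_mult_left conj_commutator_eq)
qed

lemma commutator_nat_pow_left_of_commute:
  assumes g: "g \<in> carrier G" and h: "h \<in> carrier G"
    and comm: "g \<otimes> commutator g h = commutator g h \<otimes> g"
  shows "commutator (g [^] (k::nat)) h = commutator g h [^] k"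
proof (induction k)
  case (Suc k)
  have "g \<otimes> commutator g h [^] k = commutator g h [^] k \<otimes> g"
    using group_commutes_pow[OF comm[symmetric]] g h by simp
  then have "g \<otimes> commutator g h [^] k \<otimes> inv g = commutator g h [^] k"
    using g h conj_eq_self_iff[of g "commutator g h [^] k"] by blast
  then have "g \<otimes> commutator (g [^] k) h \<otimes> inv g = commutator g h [^] k"
    using Suc by simp
  moreover have "commutator (g [^] Suc k) h = g \<otimes> commutator (g [^] k) h \<otimes> inv g \<otimes> commutator g h"
    using g h by (simp only: nat_pow_Suc2[OF g]) (simp add: commutator_mult_left)
  ultimately show ?case
    by simp
qed (use h in simp)

lemma commute_inv_left: "x \<in> carrier G \<Longrightarrow> y \<in> carrier G \<Longrightarrow> x \<otimes> y = y \<otimes> x \<Longrightarrow> inv x \<otimes> y = y \<otimes> inv x"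
  by (metis inv_solve_left' inv_solve_right m_assoc m_closed inv_closed)

lemma centralizer_subgroup:
  assumes "H \<subseteq> carrier G"
  shows "subgroup (centralizer G H) G"
proof (rule subgroupI)
  show "centralizer G H \<subseteq> carrier G"
    by (auto simp: centralizer_def)
  have "\<one> \<in> centralizer G H"
    using assms by (auto simp: centralizer_def)
  then show "centralizer G H \<noteq> {}" by blast
next
  fix a b assume a: "a \<in> centralizer G H" and b: "b \<in> centralizer G H"
  then show "inv a \<in> centralizer G H"
    using assms by (auto simp: centralizer_def intro: commute_inv_left)
  show "a \<otimes> b \<in> centralizer G H"
    using a b assms by (auto simp: centralizer_def m_assoc subset_iff) (metis m_assoc)
qed

lemma center_eq_centralizer: "center G = centralizer G (carrier G)"
  by (simp add: center_def centralizer_def)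

lemma derived_subset:
  assumes "subgroup H G" "\<And>x y. x \<in> K \<Longrightarrow> y \<in> K \<Longrightarrow> commutator x y \<in> H"
  shows "derived G K \<subseteq> H"
  unfolding derived_def using assms by (intro generate_subgroup_incl) blast+

lemma comm_subgroup_subset:
  assumes "subgroup H G" "\<And>x y. x \<in> A \<Longrightarrow> y \<in> B \<Longrightarrow> commutator x y \<in> H"
  shows "comm_subgroup G A B \<subseteq> H"
  unfolding comm_subgroup_def using assms by (intro generate_subgroup_incl) blast+

lemma generate_eq_one:
  assumes "S \<subseteq> {\<one>}"
  shows "generate G S = {\<one>}"
  using generate_subgroup_incl[OF assms triv_subgroup] generate.one[of G S] by auto

lemma comm_subgroup_eq_one:
  assumes "\<And>x y. x \<in> A \<Longrightarrow> y \<in> B \<Longrightarrow> commutator x y = \<one>"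
  shows "comm_subgroup G A B = {\<one>}"
  unfolding comm_subgroup_def using assms by (intro generate_eq_one) blast

lemma commutator_in_derived: "x \<in> K \<Longrightarrow> y \<in> K \<Longrightarrow> commutator x y \<in> derived G K"
  unfolding derived_def by (rule generate.incl) blast

lemma subgroup_pow_eq_one:
  assumes H: "subgroup H G" and comm: "\<And>x y. x \<in> H \<Longrightarrow> y \<in> H \<Longrightarrow> x \<otimes> y = y \<otimes> x"
  shows "subgroup {x \<in> H. x [^] (n::nat) = \<one>} G"
proof (rule subgroupI)
  show "{x \<in> H. x [^] n = \<one>} \<subseteq> carrier G" "{x \<in> H. x [^] n = \<one>} \<noteq> {}"
    using subgroup.subset[OF H] subgroup.one_closed[OF H] by auto
next
  fix x y assume x: "x \<in> {x \<in> H. x [^] n = \<one>}" and y: "y \<in> {x \<in> H. x [^] n = \<one>}"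
  then have c: "x \<in> carrier G" "y \<in> carrier G"
    using subgroup.subset[OF H] by auto
  show "inv x \<in> {x \<in> H. x [^] n = \<one>}"
    using x c subgroup.m_inv_closed[OF H] by (simp add: nat_pow_inv)
  show "x \<otimes> y \<in> {x \<in> H. x [^] n = \<one>}"
    using x y c subgroup.m_closed[OF H] comm by (simp add: pow_mult_distrib)
qed

lemma derived_subset_of_cyclic_mult:
  assumes M: "subgroup M G" "\<And>g x. g \<in> carrier G \<Longrightarrow> x \<in> M \<Longrightarrow> g \<otimes> x \<otimes> inv g \<in> M"
    and K: "subgroup K G" and a: "a \<in> carrier G"
    and cover: "\<And>g. g \<in> carrier G \<Longrightarrow> \<exists>i. \<exists>y\<in>K. g = a [^] (i::nat) \<otimes> y"
    and comm_K: "\<And>x y. x \<in> K \<Longrightarrow> y \<in> K \<Longrightarrow> commutator x y \<in> M"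
    and comm_a: "\<And>i x. x \<in> K \<Longrightarrow> commutator (a [^] (i::nat)) x \<in> M"
  shows "derived G (carrier G) \<subseteq> M"
proof (rule derived_subset[OF M(1)])
  note Kc = subgroup.mem_carrier[OF K] and Mc = subgroup.mem_carrier[OF M(1)]
  note M_mult = subgroup.m_closed[OF M(1)]
  have comm_left: "commutator g x \<in> M" if g: "g \<in> carrier G" and x: "x \<in> K" for g x
  proof -
    obtain i :: nat and y where y: "y \<in> K" and gy: "g = a [^] i \<otimes> y"
      using cover[OF g] by blast
    show ?thesis
      unfolding gy using a Kc[OF x] Kc[OF y] M comm_K[OF y x] comm_a[OF x]
      by (simp add: commutator_mult_left M_mult)
  qed
  have comm_right_a: "commutator g (a [^] (j::nat)) \<in> M" if g: "g \<in> carrier G" for g j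
  proof -
    obtain i :: nat and z where z: "z \<in> K" and gz: "g = a [^] i \<otimes> z"
      using cover[OF g] by blast
    have "commutator (a [^] i) (a [^] j) = \<one>"
      using a by (intro commutator_eq_one_iff[THEN iffD2]) (simp_all add: nat_pow_mult add.commute)
    moreover have "commutator z (a [^] j) \<in> M"
      using comm_a[OF z, of j] subgroup.m_inv_closed[OF M(1)] a Kc[OF z]
      by (metis inv_commutator nat_pow_closed)
    ultimately show ?thesis
      unfolding gz using a Kc[OF z] M Mc by (simp add: commutator_mult_left)
  qed
  fix g h assume g: "g \<in> carrier G" and h: "h \<in> carrier G"
  obtain j :: nat and y where y: "y \<in> K" and hy: "h = a [^] j \<otimes> y"
    using cover[OF h] by blast
  show "commutator g h \<in> M"
    unfolding hy using g a Kc[OF y] M comm_left[OF g y] comm_right_a[OF g]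
    by (simp add: commutator_mult_right M_mult)
qed

lemma nat_pow_gcd_eq_one:
  fixes a b :: nat
  assumes "x \<in> carrier G" "x [^] a = \<one>" "x [^] b = \<one>"
  shows "x [^] gcd a b = \<one>"
  using assms by (simp add: pow_eq_id)

lemma group_exponent_eq_prime_power:
  assumes p: "Factorial_Ring.prime p" and card: "card (carrier G) = p ^ k"
    and N: "N \<subseteq> carrier G"
  shows "group_exponent G N = p ^ (LEAST n. \<forall>x\<in>N. x [^] p ^ n = \<one>)"
proof -
  define E where "E = (LEAST n. \<forall>x\<in>N. x [^] p ^ n = \<one>)"
  have pk: "x [^] p ^ k = \<one>" if "x \<in> N" for x
    using that N card ord_dvd_group_order[of x] by (auto simp: order_def pow_eq_id)
  then have "\<forall>x\<in>N. x [^] p ^ k = \<one>"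
    by blast
  then have E: "\<forall>x\<in>N. x [^] p ^ E = \<one>"
    unfolding E_def by (rule LeastI)
  show ?thesis
    unfolding group_exponent_def E_def[symmetric]
  proof (rule Least_equality)
    show "0 < p ^ E \<and> (\<forall>x\<in>N. x [^] p ^ E = \<one>)"
      using E prime_gt_0_nat[OF p] by simp
  next
    fix e :: nat assume e: "0 < e \<and> (\<forall>x\<in>N. x [^] e = \<one>)"
    obtain j where j: "gcd e (p ^ k) = p ^ j"
      using divides_primepow_nat[OF p, of "gcd e (p ^ k)" k] by auto
    have "\<forall>x\<in>N. x [^] p ^ j = \<one>"
      using nat_pow_gcd_eq_one[of _ e "p ^ k"] e pk N unfolding j by blast
    then have "E \<le> j"
      unfolding E_def by (rule Least_le)
    then have "p ^ E \<le> p ^ j"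
      using prime_gt_0_nat[OF p] by (simp add: power_increasing)
    also have "p ^ j \<le> e"
      using e by (metis dvd_imp_le gcd_dvd1 j)
    finally show "p ^ E \<le> e" .
  qed
qed

end

section \<open>Finite p-groups with cyclic derived subgroup\<close>

locale pgroup_cyclic_derived = group G for G (structure) +
  fixes p m :: nat
  assumes prime_p: "Factorial_Ring.prime p" and odd_p: "odd p"
    and finite_carrier: "finite (carrier G)"
    and card_carrier: "\<exists>k. card (carrier G) = p ^ k"
    and cyclic_derived: "cyclic_group (subgroup_generated G (derived G (carrier G)))"
    and card_derived: "card (derived G (carrier G)) = p ^ m"
begin

abbreviation D :: "'a set" where "D \<equiv> derived G (carrier G)"
abbreviation C :: "'a set" where "C \<equiv> centralizer G D"
abbreviation Z :: "'a set" where "Z \<equiv> center G"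

sublocale D: subgroup D G
  by (simp add: derived_is_subgroup)

sublocale C: subgroup C G
  by (simp add: centralizer_subgroup D.subset)

sublocale Z: subgroup Z G
  by (simp add: center_eq_centralizer centralizer_subgroup)

lemma one_less_p: "1 < p"
  using prime_gt_1_nat[OF prime_p] .

lemma three_le_p: "3 \<le> p"
  using one_less_p odd_p by (cases "p = 2") auto

lemma conj_in_derived: "h \<in> carrier G \<Longrightarrow> d \<in> D \<Longrightarrow> h \<otimes> d \<otimes> inv h \<in> D"
  using normal.inv_op_closed2[OF derived_self_is_normal] .

lemma derived_generator: "\<exists>c\<in>D. ord c = p ^ m"
proof -
  interpret DG: group "subgroup_generated G D" by simp
  have carrier_DG: "carrier (subgroup_generated G D) = D"
    by (simp add: D.subgroup_axioms subgroup.carrier_subgroup_generated_subgroup)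
  obtain x where x: "x \<in> D" and DG: "D = range (\<lambda>n::int. x [^]\<^bsub>subgroup_generated G D\<^esub> n)"
    using cyclic_derived DG.cyclic_group carrier_DG by metis
  then have "D = range (\<lambda>n::int. x [^] n)"
    using int_pow_subgroup_generated[of x D] carrier_DG by simp
  then have "generate G {x} = D"
    using generate_pow[of x] generate_subgroup_incl[of "{x}" D] x D.subgroup_axioms by auto
  then show ?thesis
    using generate_pow_card[of x] x card_derived by auto
qed

lemma derived_eq_generate:
  assumes c: "c \<in> D" "ord c = p ^ m"
  shows "D = generate G {c}"
proof -
  have sub: "generate G {c} \<subseteq> D"
    using c(1) D.subgroup_axioms by (intro generate_subgroup_incl) auto
  have "card (generate G {c}) = card D"
    using generate_pow_card[OF D.mem_carrier[OF c(1)]] c(2) card_derived by simp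
  then show ?thesis
    using card_subset_eq[OF finite_subset[OF D.subset finite_carrier] sub] by simp
qed

lemma derived_elem_pow:
  assumes "c \<in> D" "ord c = p ^ m" "d \<in> D"
  shows "\<exists>k::nat. d = c [^] k"
proof -
  have "d \<in> generate G {c}"
    using assms(3) by (simp only: derived_eq_generate[OF assms(1,2)])
  then have "d \<in> {c [^] k |k. k \<in> (UNIV :: nat set)}"
    by (simp only: generate_pow_on_finite_carrier[OF finite_carrier D.mem_carrier[OF assms(1)]])
  then show ?thesis
    by blast
qed

lemma derived_commute:
  assumes "a \<in> D" "b \<in> D"
  shows "a \<otimes> b = b \<otimes> a"
proof -
  obtain c where c: "c \<in> D" "ord c = p ^ m"
    using derived_generator by blast
  obtain i j :: nat where "a = c [^] i" "b = c [^] j"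
    using derived_elem_pow[OF c assms(1)] derived_elem_pow[OF c assms(2)] by blast
  then show ?thesis
    using c(1) by (simp add: nat_pow_mult add.commute)
qed

lemma derived_pow_card:
  assumes "d \<in> D"
  shows "d [^] p ^ m = \<one>"
proof -
  obtain c where c: "c \<in> D" "ord c = p ^ m"
    using derived_generator by blast
  obtain i :: nat where "d = c [^] i"
    using derived_elem_pow[OF c assms] by blast
  then have "d [^] p ^ m = (c [^] p ^ m) [^] i"
    using c(1) by (simp add: nat_pow_pow mult.commute)
  moreover have "c [^] p ^ m = \<one>"
    using pow_ord_eq_1[OF D.mem_carrier[OF c(1)]] c(2) by simp
  ultimately show ?thesis
    by simp
qed

lemma ord_derived:
  assumes "d \<in> D"
  shows "\<exists>j\<le>m. ord d = p ^ j"
proof -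
  have "ord d dvd p ^ m"
    using pow_eq_id[OF D.mem_carrier[OF assms]] derived_pow_card[OF assms] by simp
  then show ?thesis
    using divides_primepow_nat[OF prime_p] by blast
qed

lemma derived_nat_pow_cong:
  assumes "d \<in> D" "[i = j] (mod p ^ m)"
  shows "d [^] i = d [^] j"
proof -
  have "ord d dvd p ^ m"
    using pow_eq_id[OF D.mem_carrier[OF assms(1)]] derived_pow_card[OF assms(1)] by simp
  then show ?thesis
    using nat_pow_eq_nat_pow_iff[OF D.mem_carrier[OF assms(1)]] cong_dvd_modulus_nat[OF assms(2)] by blast
qed

lemma centralizer_commute: "x \<in> C \<Longrightarrow> d \<in> D \<Longrightarrow> x \<otimes> d = d \<otimes> x"
  unfolding centralizer_def by blast

lemma omega_derived_subgroup: "subgroup {d \<in> D. d [^] (n::nat) = \<one>} G"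
  by (rule subgroup_pow_eq_one[OF D.subgroup_axioms derived_commute])

lemma omega_derived_eq_generate:
  assumes c: "c \<in> D" "ord c = p ^ m" and k: "k \<le> m"
  shows "{d \<in> D. d [^] p ^ k = \<one>} = generate G {c [^] p ^ (m - k)}"
proof
  have cc: "c \<in> carrier G"
    using c(1) by (rule D.mem_carrier)
  have pm: "p ^ m = p ^ (m - k) * p ^ k"
    using k by (simp flip: power_add)
  have "(c [^] p ^ (m - k)) [^] p ^ k = c [^] ord c"
    using cc c(2) pm by (simp add: nat_pow_pow)
  then have "(c [^] p ^ (m - k)) [^] p ^ k = \<one>"
    using cc by simp
  then show "generate G {c [^] p ^ (m - k)} \<subseteq> {d \<in> D. d [^] p ^ k = \<one>}"
    using subgroup_nat_pow_closed[OF D.subgroup_axioms c(1)]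
    by (intro generate_subgroup_incl omega_derived_subgroup) auto
  show "{d \<in> D. d [^] p ^ k = \<one>} \<subseteq> generate G {c [^] p ^ (m - k)}"
  proof
    fix d assume d: "d \<in> {d \<in> D. d [^] p ^ k = \<one>}"
    then obtain i :: nat where i: "d = c [^] i"
      using derived_elem_pow[OF c] by blast
    have "c [^] (i * p ^ k) = \<one>"
      using d cc by (simp add: i nat_pow_pow)
    then have "p ^ (m - k) * p ^ k dvd i * p ^ k"
      using pow_eq_id[OF cc] c(2) pm by simp
    then obtain j where "i = p ^ (m - k) * j"
      using prime_gt_0_nat[OF prime_p] by (auto elim: dvdE)
    then have "d = (c [^] p ^ (m - k)) [^] j"
      using cc by (simp add: i nat_pow_pow)
    then show "d \<in> generate G {c [^] p ^ (m - k)}"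
      using subgroup_nat_pow_closed[OF generate_is_subgroup generate.incl] cc by auto
  qed
qed

lemma card_omega_derived:
  assumes "k \<le> m"
  shows "card {d \<in> D. d [^] p ^ k = \<one>} = p ^ k"
proof -
  obtain c where c: "c \<in> D" "ord c = p ^ m"
    using derived_generator by blast
  have cc: "c \<in> carrier G"
    using c(1) by (rule D.mem_carrier)
  have pm: "p ^ m = p ^ (m - k) * p ^ k"
    using assms by (simp flip: power_add)
  have "ord (c [^] p ^ (m - k)) = p ^ k"
    using ord_pow[OF cc, of "p ^ (m - k)"] c(2) prime_gt_0_nat[OF prime_p] pm by simp
  then show ?thesis
    using generate_pow_card[of "c [^] p ^ (m - k)"] cc omega_derived_eq_generate[OF c assms]
    by simp
qed

lemma mho_derived:
  assumes "k \<le> m"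
  shows "mho G p (m - k) D = {d \<in> D. d [^] p ^ k = \<one>}"
proof
  have pm: "p ^ m = p ^ (m - k) * p ^ k"
    using assms by (simp flip: power_add)
  have "x [^] p ^ (m - k) \<in> {d \<in> D. d [^] p ^ k = \<one>}" if "x \<in> D" for x
    using that derived_pow_card[OF that] subgroup_nat_pow_closed[OF D.subgroup_axioms that]
    by (simp add: nat_pow_pow D.mem_carrier flip: pm)
  then show "mho G p (m - k) D \<subseteq> {d \<in> D. d [^] p ^ k = \<one>}"
    unfolding mho_def by (intro generate_subgroup_incl omega_derived_subgroup) auto
  obtain c where c: "c \<in> D" "ord c = p ^ m"
    using derived_generator by blast
  have "generate G {c [^] p ^ (m - k)} \<subseteq> mho G p (m - k) D"
    unfolding mho_def using c(1) by (intro mono_generate) blast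
  then show "{d \<in> D. d [^] p ^ k = \<one>} \<subseteq> mho G p (m - k) D"
    using omega_derived_eq_generate[OF c assms] by simp
qed

definition conj_exp :: "'a \<Rightarrow> nat" where
  "conj_exp h = (SOME k. k < p ^ m \<and> (\<forall>d\<in>D. h \<otimes> d \<otimes> inv h = d [^] k))"

lemma conj_exp:
  assumes h: "h \<in> carrier G"
  shows "conj_exp h < p ^ m \<and> (\<forall>d\<in>D. h \<otimes> d \<otimes> inv h = d [^] conj_exp h)"
proof -
  obtain c where c: "c \<in> D" "ord c = p ^ m"
    using derived_generator by blast
  have cc: "c \<in> carrier G"
    using c(1) by (rule D.mem_carrier)
  obtain k :: nat where k: "h \<otimes> c \<otimes> inv h = c [^] k"
    using derived_elem_pow[OF c conj_in_derived[OF h c(1)]] by blast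
  have "h \<otimes> d \<otimes> inv h = d [^] (k mod p ^ m)" if d: "d \<in> D" for d
  proof -
    obtain i :: nat where i: "d = c [^] i"
      using derived_elem_pow[OF c d] by blast
    have "h \<otimes> d \<otimes> inv h = (c [^] k) [^] i"
      unfolding i using conj_nat_pow[OF h cc] k by simp
    also have "\<dots> = d [^] k"
      using cc by (simp add: i nat_pow_pow mult.commute)
    also have "\<dots> = d [^] (k mod p ^ m)"
      using d by (intro derived_nat_pow_cong) (simp_all add: cong_def)
    finally show ?thesis .
  qed
  moreover have "k mod p ^ m < p ^ m"
    using prime_gt_0_nat[OF prime_p] by simp
  ultimately have "\<exists>k. k < p ^ m \<and> (\<forall>d\<in>D. h \<otimes> d \<otimes> inv h = d [^] k)"
    by blast
  then show ?thesis
    unfolding conj_exp_def by (rule someI_ex)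
qed

lemma conj_exp_less: "h \<in> carrier G \<Longrightarrow> conj_exp h < p ^ m"
  using conj_exp by blast

lemma conj_eq_pow_conj_exp: "h \<in> carrier G \<Longrightarrow> d \<in> D \<Longrightarrow> h \<otimes> d \<otimes> inv h = d [^] conj_exp h"
  using conj_exp by blast

lemma nat_pow_conj_eq_pow_conj_exp:
  assumes h: "h \<in> carrier G" and d: "d \<in> D"
  shows "h [^] (i::nat) \<otimes> d \<otimes> inv (h [^] i) = d [^] (conj_exp h ^ i)"
proof (induction i)
  case (Suc i)
  have "h [^] Suc i \<otimes> d \<otimes> inv (h [^] Suc i) = h \<otimes> (h [^] i \<otimes> d \<otimes> inv (h [^] i)) \<otimes> inv h"
    using h D.mem_carrier[OF d] by (simp only: nat_pow_Suc2[OF h]) (simp add: inv_mult_group m_assoc)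
  also have "\<dots> = (d [^] (conj_exp h ^ i)) [^] conj_exp h"
    using Suc conj_eq_pow_conj_exp[OF h subgroup_nat_pow_closed[OF D.subgroup_axioms d]] by simp
  finally show ?case
    using D.mem_carrier[OF d] by (simp add: nat_pow_pow mult.commute)
qed (use D.mem_carrier[OF d] in simp)

lemma nat_pow_in_centralizer_iff:
  assumes h: "h \<in> carrier G"
  shows "h [^] (i::nat) \<in> C \<longleftrightarrow> [conj_exp h ^ i = 1] (mod p ^ m)"
proof
  assume hC: "h [^] i \<in> C"
  obtain c where c: "c \<in> D" "ord c = p ^ m"
    using derived_generator by blast
  have cc: "c \<in> carrier G" and hi: "h [^] i \<in> carrier G"
    using D.mem_carrier[OF c(1)] h by auto
  have "c [^] (conj_exp h ^ i) = h [^] i \<otimes> c \<otimes> inv (h [^] i)"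
    by (rule nat_pow_conj_eq_pow_conj_exp[OF h c(1), symmetric])
  also have "\<dots> = c"
    using conj_eq_self_iff[OF hi cc, THEN iffD2, OF centralizer_commute[OF hC c(1)]] .
  also have "\<dots> = c [^] (1::nat)"
    using cc by simp
  finally show "[conj_exp h ^ i = 1] (mod p ^ m)"
    by (simp only: nat_pow_eq_nat_pow_iff[OF D.mem_carrier[OF c(1)]] c(2))
next
  assume cong: "[conj_exp h ^ i = 1] (mod p ^ m)"
  have hi: "h [^] i \<in> carrier G"
    using h by simp
  have "h [^] i \<otimes> d = d \<otimes> h [^] i" if d: "d \<in> D" for d
  proof -
    have "h [^] i \<otimes> d \<otimes> inv (h [^] i) = d [^] (conj_exp h ^ i)"
      by (rule nat_pow_conj_eq_pow_conj_exp[OF h d])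
    also have "\<dots> = d [^] (1::nat)"
      by (rule derived_nat_pow_cong[OF d cong])
    also have "\<dots> = d"
      using D.mem_carrier[OF d] by simp
    finally show ?thesis
      using conj_eq_self_iff[OF hi D.mem_carrier[OF d]] by blast
  qed
  then show "h [^] i \<in> C"
    unfolding centralizer_def using hi by blast
qed

lemma in_centralizer_iff:
  assumes "h \<in> carrier G"
  shows "h \<in> C \<longleftrightarrow> [conj_exp h = 1] (mod p ^ m)"
  using nat_pow_in_centralizer_iff[OF assms, of 1] assms by simp

lemma conj_exp_cong_one:
  assumes m: "0 < m" and h: "h \<in> carrier G"
  shows "[conj_exp h = 1] (mod p)"
proof -
  obtain k where k: "card (carrier G) = p ^ k"
    using card_carrier by blast
  have "h [^] p ^ k = \<one>"
    using pow_order_eq_1[OF h] k by (simp add: order_def)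
  then have "h [^] p ^ k \<in> C"
    using C.one_closed by (simp only:)
  then have "[conj_exp h ^ p ^ k = 1] (mod p ^ m)"
    using nat_pow_in_centralizer_iff[OF h] by blast
  then have "[conj_exp h ^ p ^ k = 1] (mod p)"
    by (rule cong_dvd_modulus_nat) (use m in \<open>simp add: dvd_power\<close>)
  then show ?thesis
    by (rule cong_trans[OF cong_sym[OF cong_pow_prime_power_self[OF prime_p]]])
qed

lemma conj_exp_ge_one:
  assumes "0 < m" "h \<in> carrier G"
  shows "1 \<le> conj_exp h"
proof (rule ccontr)
  assume "\<not> 1 \<le> conj_exp h"
  then have "conj_exp h = 0"
    by simp
  then show False
    using conj_exp_cong_one[OF assms] one_less_p by (simp add: cong_def)
qed

lemma commutator_nat_pow_left:
  assumes h: "h \<in> carrier G" and x: "x \<in> carrier G"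
  shows "commutator (h [^] i) x = commutator h x [^] geom_sum (conj_exp h) i"
proof (induction i)
  case (Suc i)
  define e where "e = commutator h x"
  have e: "e \<in> D" "e \<in> carrier G"
    unfolding e_def using commutator_in_derived[OF h x] h x by auto
  have "commutator (h [^] Suc i) x = h \<otimes> commutator (h [^] i) x \<otimes> inv h \<otimes> e"
    unfolding e_def nat_pow_Suc2[OF h] by (rule commutator_mult_left) (use h x in simp_all)
  also have "h \<otimes> commutator (h [^] i) x \<otimes> inv h = (e [^] geom_sum (conj_exp h) i) [^] conj_exp h"
    unfolding Suc e_def[symmetric]
    using conj_eq_pow_conj_exp[OF h subgroup_nat_pow_closed[OF D.subgroup_axioms e(1)]] .
  also have "(e [^] geom_sum (conj_exp h) i) [^] conj_exp h \<otimes> e = e [^] geom_sum (conj_exp h) (Suc i)"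
    using e(2) by (simp add: nat_pow_pow mult.commute)
  finally show ?case
    by (simp only: e_def)
qed (use x in simp)

lemma commutator_centralizer_in_derived_center:
  assumes x: "x \<in> C" and y: "y \<in> C"
  shows "commutator x y \<in> D \<inter> Z"
proof -
  have c: "x \<in> carrier G" "y \<in> carrier G"
    using x y by (auto intro: C.mem_carrier)
  have cxy: "commutator x y \<in> carrier G"
    using c by simp
  have "h \<otimes> commutator x y = commutator x y \<otimes> h" if h: "h \<in> carrier G" for h
  proof -
    define d1 d2 where "d1 = commutator h x" and "d2 = commutator h y"
    have d: "d1 \<in> D" "d2 \<in> D"
      unfolding d1_def d2_def using h c by (auto intro: commutator_in_derived)
    have "h \<otimes> x \<otimes> inv h = d1 \<otimes> x" "h \<otimes> y \<otimes> inv h = d2 \<otimes> y"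
      unfolding d1_def d2_def using h c by (simp_all add: m_assoc)
    then have "h \<otimes> commutator x y \<otimes> inv h = commutator (d1 \<otimes> x) (d2 \<otimes> y)"
      using conj_commutator[OF h c] by simp
    also have "\<dots> = commutator x y"
    proof (rule commutator_mult_commuting[OF D.mem_carrier[OF d(1)] D.mem_carrier[OF d(2)] c])
      show "d1 \<otimes> d2 = d2 \<otimes> d1"
        by (rule derived_commute[OF d])
      show "d1 \<otimes> x = x \<otimes> d1" "d2 \<otimes> x = x \<otimes> d2"
        using centralizer_commute[OF x d(1)] centralizer_commute[OF x d(2)] by simp_all
      show "d1 \<otimes> y = y \<otimes> d1" "d2 \<otimes> y = y \<otimes> d2"
        using centralizer_commute[OF y d(1)] centralizer_commute[OF y d(2)] by simp_all
    qed
    finally show ?thesis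
      using conj_eq_self_iff[OF h cxy] by blast
  qed
  then have "commutator x y \<in> Z"
    using cxy unfolding center_def by auto
  then show ?thesis
    using commutator_in_derived[OF c] by blast
qed

lemma conj_nat_pow_centralizer:
  assumes h: "h \<in> carrier G" and g: "g \<in> C"
  shows "h \<otimes> g [^] (n::nat) \<otimes> inv h = commutator h g [^] n \<otimes> g [^] n"
proof -
  have gc: "g \<in> carrier G"
    using C.mem_carrier[OF g] .
  have e: "commutator h g \<in> D" "commutator h g \<in> carrier G"
    using commutator_in_derived[OF h gc] h gc by auto
  have "h \<otimes> g \<otimes> inv h = commutator h g \<otimes> g"
    using h gc by (simp add: m_assoc)
  then have "h \<otimes> g [^] n \<otimes> inv h = (commutator h g \<otimes> g) [^] n"
    using conj_nat_pow[OF h gc, of n] by simp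
  also have "\<dots> = commutator h g [^] n \<otimes> g [^] n"
    using pow_mult_distrib[OF centralizer_commute[OF g e(1), symmetric] e(2) gc] .
  finally show ?thesis .
qed

subsection \<open>Exponent and Jennings series of subgroups of the centralizer\<close>

lemma lcs_two: "lcs G N 2 = comm_subgroup G N N"
  by (simp add: numeral_2_eq_2)

lemma lcs_two_subset_derived:
  assumes "N \<subseteq> carrier G"
  shows "lcs G N 2 \<subseteq> D"
  unfolding lcs_two using assms
  by (intro comm_subgroup_subset[OF D.subgroup_axioms] commutator_in_derived) auto

lemma lcs_eq_one:
  assumes N: "N \<subseteq> C" and i: "3 \<le> i"
  shows "lcs G N i = {\<one>}"
  using i
proof (induction i rule: nat_induct_at_least)
  case base
  have "lcs G N 3 = comm_subgroup G (lcs G N 2) N"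
    by (simp add: numeral_3_eq_3 numeral_2_eq_2)
  also have "\<dots> = {\<one>}"
  proof (rule comm_subgroup_eq_one)
    fix x y assume x: "x \<in> lcs G N 2" and y: "y \<in> N"
    have "x \<in> D"
      using lcs_two_subset_derived[OF subset_trans[OF N C.subset]] x by blast
    then show "commutator x y = \<one>"
      using centralizer_commute[OF subsetD[OF N y]] C.mem_carrier[OF subsetD[OF N y]] D.mem_carrier
      by (simp add: commutator_eq_one_iff)
  qed
  finally show ?case .
next
  case (Suc n)
  then obtain k where "n = Suc (Suc k)"
    by (metis Suc_le_D numeral_3_eq_3 Suc_le_mono)
  then have "lcs G N (Suc n) = comm_subgroup G (lcs G N n) N"
    by simp
  also have "\<dots> = {\<one>}"
    using Suc.IH N C.mem_carrier by (intro comm_subgroup_eq_one) auto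
  finally show ?case .
qed

lemma lcs_two_pow_eq_one:
  assumes N: "N \<subseteq> C" and e: "\<And>x. x \<in> N \<Longrightarrow> x [^] (e::nat) = \<one>" and y: "y \<in> lcs G N 2"
  shows "y [^] e = \<one>"
proof -
  have "lcs G N 2 \<subseteq> {d \<in> D. d [^] e = \<one>}"
    unfolding lcs_two
  proof (rule comm_subgroup_subset[OF omega_derived_subgroup])
    fix x z assume x: "x \<in> N" and z: "z \<in> N"
    have c: "x \<in> carrier G" "z \<in> carrier G"
      using x z N C.mem_carrier by auto
    have w: "commutator x z \<in> D"
      using commutator_in_derived[OF c] .
    have "commutator (x [^] e) z = commutator x z [^] e"
      using centralizer_commute[OF subsetD[OF N x] w] c
      by (intro commutator_nat_pow_left_of_commute) auto
    moreover have "commutator (x [^] e) z = \<one>"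
      using e[OF x] c by simp
    ultimately show "commutator x z \<in> {d \<in> D. d [^] e = \<one>}"
      using w by simp
  qed
  then show ?thesis
    using y by blast
qed

lemma lcs_pow_eq_one:
  assumes N: "N \<subseteq> C" and e: "\<And>x. x \<in> N \<Longrightarrow> x [^] (e::nat) = \<one>"
    and i: "1 \<le> i" and y: "y \<in> lcs G N i"
  shows "y [^] e = \<one>"
proof -
  consider "i = 1" | "i = 2" | "3 \<le> i"
    using i by linarith
  then show ?thesis
  proof cases
    case 1
    then show ?thesis using y e by simp
  next
    case 2
    then show ?thesis using lcs_two_pow_eq_one[OF N e] y by simp
  next
    case 3
    then show ?thesis using y lcs_eq_one[OF N] by simp
  qed
qed

lemma exp_le_of_power_le_mult:
  assumes "i < 3" and "p ^ n \<le> i * p ^ j"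
  shows "n \<le> j"
proof -
  have "i < p"
    using assms(1) three_le_p by linarith
  then have "i * p ^ j < p * p ^ j"
    using prime_gt_0_nat[OF prime_p] by (intro mult_less_mono1) simp_all
  then have "p ^ n < p ^ Suc j"
    using le_less_trans[OF assms(2)] by (simp only: power_Suc)
  then have "n < Suc j"
    by (rule power_less_imp_less_exp[OF one_less_p])
  then show ?thesis
    by simp
qed

lemma mho_lcs_eq_one:
  assumes N: "N \<subseteq> C" and exp: "\<forall>x\<in>N. x [^] p ^ n = \<one>"
    and i: "1 \<le> i" "p ^ n \<le> i * p ^ j"
  shows "mho G p j (lcs G N i) = {\<one>}"
proof -
  have "y [^] p ^ j = \<one>" if y: "y \<in> lcs G N i" for y
  proof (cases "3 \<le> i")
    case True
    then show ?thesis
      using y lcs_eq_one[OF N] by simp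
  next
    case False
    then have "i < 3"
      by simp
    then have "n \<le> j"
      using exp_le_of_power_le_mult i(2) by blast
    then have "p ^ n dvd p ^ j"
      by (rule le_imp_power_dvd)
    then have "x [^] p ^ j = \<one>" if "x \<in> N" for x
      using exp that N C.mem_carrier pow_eq_id by (metis dvd_trans subsetD)
    then show ?thesis
      by (rule lcs_pow_eq_one[OF N _ i(1) y])
  qed
  then show ?thesis
    unfolding mho_def by (intro generate_eq_one) blast
qed

lemma jennings_eq_one_iff:
  assumes N: "N \<subseteq> C"
  shows "jennings G p N (p ^ n) = {\<one>} \<longleftrightarrow> (\<forall>x\<in>N. x [^] p ^ n = \<one>)"
proof
  assume J: "jennings G p N (p ^ n) = {\<one>}"
  have factor: "mho G p n (lcs G N 1) \<in> {mho G p j (lcs G N i) |i j. 1 \<le> i \<and> p ^ n \<le> i * p ^ j}"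
    by (rule CollectI, rule exI[of _ 1], rule exI[of _ n]) simp
  show "\<forall>x\<in>N. x [^] p ^ n = \<one>"
  proof
    fix x assume x: "x \<in> N"
    have "x [^] p ^ n \<in> {y [^] p ^ n |y. y \<in> lcs G N 1}"
      using x by auto
    then have "x [^] p ^ n \<in> mho G p n (lcs G N 1)"
      unfolding mho_def by (rule generate.incl)
    then have "x [^] p ^ n \<in> jennings G p N (p ^ n)"
      unfolding jennings_def by (rule generate.incl[OF UnionI[OF factor]])
    then show "x [^] p ^ n = \<one>"
      using J by blast
  qed
next
  assume exp: "\<forall>x\<in>N. x [^] p ^ n = \<one>"
  show "jennings G p N (p ^ n) = {\<one>}"
    unfolding jennings_def
  proof (rule generate_eq_one, rule subsetI)
    fix w assume "w \<in> \<Union>{mho G p j (lcs G N i) |i j. 1 \<le> i \<and> p ^ n \<le> i * p ^ j}"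
    then obtain i j where "1 \<le> i" "p ^ n \<le> i * p ^ j" "w \<in> mho G p j (lcs G N i)"
      by blast
    then show "w \<in> {\<one>}"
      using mho_lcs_eq_one[OF N exp] by blast
  qed
qed

lemma group_exponent_eq_jennings:
  assumes "N \<subseteq> C"
  shows "group_exponent G N = p ^ (LEAST n. jennings G p N (p ^ n) = {\<one>})"
proof -
  obtain k where "card (carrier G) = p ^ k"
    using card_carrier by blast
  then show ?thesis
    using group_exponent_eq_prime_power[OF prime_p _ subset_trans[OF assms C.subset]]
    by (simp add: jennings_eq_one_iff[OF assms])
qed

end

section \<open>Groups acting non-trivially on the derived subgroup\<close>

locale nontrivial_conj_action = pgroup_cyclic_derived +
  fixes a :: 'a and s u :: nat
  assumes a_carrier: "a \<in> carrier G"
    and conj_exp_a: "conj_exp a = 1 + p ^ s * u"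
    and not_dvd_u: "\<not> p dvd u"
    and s_pos: "0 < s" and s_less: "s < m"
    and conj_exp_cong: "\<And>h. h \<in> carrier G \<Longrightarrow> [conj_exp h = 1] (mod p ^ s)"
begin

lemma m_pos: "0 < m"
  using s_pos s_less by simp

lemma derived_center_pow_eq_one:
  assumes d: "d \<in> D \<inter> Z"
  shows "d [^] p ^ s = \<one>"
proof -
  have dD: "d \<in> D" and dc: "d \<in> carrier G"
    using d D.mem_carrier by auto
  have "a \<otimes> d = d \<otimes> a"
    using d a_carrier unfolding center_def by auto
  then have "a \<otimes> d \<otimes> inv a = d"
    using conj_eq_self_iff[OF a_carrier dc] by blast
  then have "d [^] (1 + p ^ s * u) = d [^] (1::nat)"
    using conj_eq_pow_conj_exp[OF a_carrier dD] conj_exp_a dc by simp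
  then have "ord d dvd p ^ s * u"
    by (simp only: nat_pow_eq_nat_pow_iff[OF dc] cong_add_lcancel_0_nat cong_0_iff)
  moreover obtain j where "ord d = p ^ j"
    using ord_derived[OF dD] by blast
  moreover have "coprime (p ^ j) u"
    using not_dvd_u prime_p by (simp add: prime_imp_coprime)
  ultimately have "ord d dvd p ^ s"
    by (simp add: coprime_dvd_mult_left_iff)
  then show ?thesis
    using pow_eq_id[OF dc] by simp
qed

lemma derived_in_center_if_pow_eq_one:
  assumes dD: "d \<in> D" and d: "d [^] p ^ s = \<one>"
  shows "d \<in> Z"
proof -
  have dc: "d \<in> carrier G"
    using D.mem_carrier[OF dD] .
  have "d \<otimes> g = g \<otimes> d" if g: "g \<in> carrier G" for g
  proof -
    have "[conj_exp g = 1] (mod ord d)"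
      using cong_dvd_modulus_nat[OF conj_exp_cong[OF g]] d pow_eq_id[OF dc] by simp
    then have "d [^] conj_exp g = d [^] (1::nat)"
      using nat_pow_eq_nat_pow_iff[OF dc] by blast
    then have "g \<otimes> d \<otimes> inv g = d"
      using conj_eq_pow_conj_exp[OF g dD] dc by simp
    then show ?thesis
      using conj_eq_self_iff[OF g dc] by simp
  qed
  then show ?thesis
    using dc unfolding center_def by blast
qed

lemma derived_inter_center: "D \<inter> Z = {d \<in> D. d [^] p ^ s = \<one>}"
  using derived_center_pow_eq_one derived_in_center_if_pow_eq_one by blast

lemma card_derived_inter_center: "card (D \<inter> Z) = p ^ s"
  unfolding derived_inter_center using card_omega_derived s_less by simp

lemma mho_eq_derived_inter_center: "mho G p (m - s) D = D \<inter> Z"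
  unfolding derived_inter_center using mho_derived s_less by simp

lemma carrier_decomp:
  assumes g: "g \<in> carrier G"
  shows "\<exists>i::nat. \<exists>y\<in>C. g = a [^] i \<otimes> y"
proof -
  obtain i where i: "[conj_exp a ^ i = conj_exp g] (mod p ^ m)"
    using cong_one_is_power[OF prime_p odd_p conj_exp_a not_dvd_u s_pos less_imp_le[OF s_less]
        conj_exp_cong[OF g]] by blast
  define A where "A = a [^] i"
  have A: "A \<in> carrier G"
    unfolding A_def using a_carrier by simp
  define y where "y = inv A \<otimes> g"
  have y: "y \<in> carrier G"
    unfolding y_def using A g by simp
  have "y \<otimes> d = d \<otimes> y" if d: "d \<in> D" for d
  proof -
    have dc: "d \<in> carrier G"
      using D.mem_carrier[OF d] .
    have "g \<otimes> d \<otimes> inv g = d [^] conj_exp g"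
      by (rule conj_eq_pow_conj_exp[OF g d])
    also have "\<dots> = d [^] (conj_exp a ^ i)"
      using derived_nat_pow_cong[OF d cong_sym[OF i]] .
    also have "\<dots> = A \<otimes> d \<otimes> inv A"
      unfolding A_def by (rule nat_pow_conj_eq_pow_conj_exp[OF a_carrier d, symmetric])
    finally have conj: "g \<otimes> d \<otimes> inv g = A \<otimes> d \<otimes> inv A" .
    have "y \<otimes> d = inv A \<otimes> (g \<otimes> d \<otimes> inv g) \<otimes> g"
      unfolding y_def using A g dc by (simp add: m_assoc)
    also have "\<dots> = d \<otimes> y"
      unfolding conj y_def using A g dc by (simp add: m_assoc)
    finally show ?thesis .
  qed
  then have "y \<in> C"
    using y unfolding centralizer_def by blast
  moreover have "g = A \<otimes> y"
    unfolding y_def using A g by simp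
  ultimately show ?thesis
    unfolding A_def by blast
qed

lemma pow_a_in_centralizer: "a [^] p ^ (m - s) \<in> C"
proof -
  have "multiplicity p (p ^ (m - s)) = m - s"
    using prime_p by (simp add: prime_imp_prime_elem)
  then have "[conj_exp a ^ p ^ (m - s) = 1] (mod p ^ m)"
    using cong_power_one_iff[OF prime_p odd_p conj_exp_a not_dvd_u s_pos, of "p ^ (m - s)" m]
      prime_gt_0_nat[OF prime_p] s_less by simp
  then show ?thesis
    using nat_pow_in_centralizer_iff[OF a_carrier] by blast
qed

lemma in_center_if_commutes:
  assumes z: "z \<in> carrier G" and za: "z \<otimes> a = a \<otimes> z"
    and zC: "\<And>y. y \<in> C \<Longrightarrow> z \<otimes> y = y \<otimes> z"
  shows "z \<in> Z"
proof -
  have "z \<otimes> h = h \<otimes> z" if h: "h \<in> carrier G" for h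
  proof -
    obtain i :: nat and y where y: "y \<in> C" and hy: "h = a [^] i \<otimes> y"
      using carrier_decomp[OF h] by blast
    have yc: "y \<in> carrier G"
      using C.mem_carrier[OF y] .
    have "a [^] i \<otimes> z = z \<otimes> a [^] i"
      using group_commutes_pow[OF za[symmetric] a_carrier z] .
    then have "z \<otimes> (a [^] i \<otimes> y) = a [^] i \<otimes> (z \<otimes> y)"
      using z yc a_carrier by (simp flip: m_assoc)
    also have "\<dots> = (a [^] i \<otimes> y) \<otimes> z"
      using zC[OF y] z yc a_carrier by (simp add: m_assoc)
    finally show ?thesis
      unfolding hy .
  qed
  then show ?thesis
    using z unfolding center_def by blast
qed

lemma derived_subset_omega_if_commutators_a:
  assumes k: "s \<le> k" and a_x: "\<And>x. x \<in> C \<Longrightarrow> commutator a x [^] p ^ k = \<one>"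
  shows "D \<subseteq> {d \<in> D. d [^] p ^ k = \<one>}"
proof (rule derived_subset_of_cyclic_mult[OF omega_derived_subgroup _ C.subgroup_axioms a_carrier
      carrier_decomp])
  show "g \<otimes> x \<otimes> inv g \<in> {d \<in> D. d [^] p ^ k = \<one>}"
    if "g \<in> carrier G" "x \<in> {d \<in> D. d [^] p ^ k = \<one>}" for g x
    using that conj_in_derived conj_nat_pow D.mem_carrier by auto
  show "commutator x y \<in> {d \<in> D. d [^] p ^ k = \<one>}" if "x \<in> C" "y \<in> C" for x y
  proof -
    have f: "commutator x y \<in> D \<inter> Z" and fc: "commutator x y \<in> carrier G"
      using commutator_centralizer_in_derived_center[OF that] D.mem_carrier by auto
    have "ord (commutator x y) dvd p ^ s"
      using derived_center_pow_eq_one[OF f] pow_eq_id[OF fc] by simp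
    then have "ord (commutator x y) dvd p ^ k"
      using le_imp_power_dvd[OF k] by (rule dvd_trans)
    then show ?thesis
      using f pow_eq_id[OF fc] by simp
  qed
next
  fix i :: nat and x assume x: "x \<in> C"
  have xc: "x \<in> carrier G"
    using C.mem_carrier[OF x] .
  have "commutator a x \<in> {d \<in> D. d [^] p ^ k = \<one>}"
    using commutator_in_derived[OF a_carrier xc] a_x[OF x] by blast
  then show "commutator (a [^] i) x \<in> {d \<in> D. d [^] p ^ k = \<one>}"
    unfolding commutator_nat_pow_left[OF a_carrier xc] by (rule subgroup_nat_pow_closed[OF omega_derived_subgroup])
qed

lemma exists_commutator_generator: "\<exists>x\<in>C. ord (commutator a x) = p ^ m"
proof (rule ccontr)
  assume no_gen: "\<not> (\<exists>x\<in>C. ord (commutator a x) = p ^ m)"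
  have "commutator a x [^] p ^ (m - 1) = \<one>" if x: "x \<in> C" for x
  proof -
    have c: "commutator a x \<in> D" "commutator a x \<in> carrier G"
      using commutator_in_derived[OF a_carrier C.mem_carrier[OF x]] D.mem_carrier by auto
    obtain j where j: "j \<le> m" "ord (commutator a x) = p ^ j"
      using ord_derived[OF c(1)] by blast
    then have "j \<le> m - 1"
      using no_gen x by (cases "j = m") auto
    then show ?thesis
      using j(2) pow_eq_id[OF c(2)] by (simp add: le_imp_power_dvd)
  qed
  then have "D \<subseteq> {d \<in> D. d [^] p ^ (m - 1) = \<one>}"
    using s_less by (intro derived_subset_omega_if_commutators_a) auto
  then have "card D \<le> card {d \<in> D. d [^] p ^ (m - 1) = \<one>}"
    using finite_subset[OF D.subset finite_carrier] by (intro card_mono) auto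
  then have "p ^ m \<le> p ^ (m - 1)"
    unfolding card_derived using card_omega_derived[of "m - 1"] by simp
  then have "m \<le> m - 1"
    by (rule power_le_imp_le_exp[OF one_less_p])
  then show False
    using m_pos by simp
qed

lemma ord_commutator_pow_a:
  assumes x: "x \<in> C" and ord_c: "ord (commutator a x) = p ^ m"
  shows "ord (commutator (a [^] p ^ (m - s)) x) = p ^ s"
proof -
  define n where "n = p ^ (m - s)"
  have xc: "x \<in> carrier G" and cc: "commutator a x \<in> carrier G"
    using C.mem_carrier[OF x] a_carrier by auto
  have pm: "p ^ m = n * p ^ s"
    unfolding n_def using s_less by (simp flip: power_add)
  obtain w where w: "geom_sum (conj_exp a) n = n * w" "\<not> p dvd w"
    unfolding n_def
    using geom_sum_prime_power_exact[OF prime_p odd_p conj_exp_cong_one[OF m_pos a_carrier]] by blast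
  have "coprime (p ^ s) w"
    using w(2) prime_p by (simp add: prime_imp_coprime coprime_commute)
  then have "gcd (p ^ m) (n * w) = n"
    unfolding pm by (simp add: gcd_mult_distrib_nat[symmetric] mult.commute[of _ n] coprime_imp_gcd_eq_1)
  then show ?thesis
    unfolding n_def[symmetric] commutator_nat_pow_left[OF a_carrier xc] w(1)
    using ord_pow_gen[OF cc, of "n * w"] ord_c w(2) prime_gt_0_nat[OF prime_p] pm by auto
qed

lemma derived_centralizer: "derived G C = D \<inter> Z"
proof -
  have sub: "derived G C \<subseteq> D \<inter> Z"
    using subgroups_Inter_pair[OF D.subgroup_axioms Z.subgroup_axioms]
      commutator_centralizer_in_derived_center by (rule derived_subset)
  obtain x where x: "x \<in> C" and ord_c: "ord (commutator a x) = p ^ m"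
    using exists_commutator_generator by blast
  define b where "b = commutator (a [^] p ^ (m - s)) x"
  have "b \<in> derived G C"
    unfolding b_def using pow_a_in_centralizer x by (rule commutator_in_derived)
  then have gen_sub: "generate G {b} \<subseteq> derived G C"
    using derived_is_subgroup[OF C.subset] by (intro generate_subgroup_incl) auto
  have "card (generate G {b}) = card (D \<inter> Z)"
    using generate_pow_card[of b] ord_commutator_pow_a[OF x ord_c] C.mem_carrier[OF x] a_carrier
      card_derived_inter_center by (simp add: b_def)
  moreover have "finite (D \<inter> Z)"
    using finite_subset[OF D.subset finite_carrier] by blast
  ultimately have "generate G {b} = D \<inter> Z"
    using card_subset_eq subset_trans[OF gen_sub sub] by blast
  then show ?thesis
    using sub gen_sub by blast
qed

lemma pow_mult_derived_commutes_centralizer: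
  assumes g: "g \<in> C" and d: "d \<in> D" and y: "y \<in> C"
  shows "g [^] p ^ s \<otimes> d \<otimes> y = y \<otimes> (g [^] p ^ s \<otimes> d)"
proof -
  have c: "g \<in> carrier G" "y \<in> carrier G" "d \<in> carrier G"
    using C.mem_carrier D.mem_carrier g y d by auto
  have f: "commutator g y \<in> D \<inter> Z"
    by (rule commutator_centralizer_in_derived_center[OF g y])
  then have "commutator g y \<otimes> g = g \<otimes> commutator g y"
    using c(1) unfolding center_def by blast
  then have "commutator (g [^] p ^ s) y = commutator g y [^] p ^ s"
    by (rule commutator_nat_pow_left_of_commute[OF c(1,2) sym])
  also have "\<dots> = \<one>"
    by (rule derived_center_pow_eq_one[OF f])
  finally have gy: "g [^] p ^ s \<otimes> y = y \<otimes> g [^] p ^ s"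
    using c by (intro commutator_eq_one_iff[THEN iffD1]) simp_all
  have "g [^] p ^ s \<otimes> d \<otimes> y = g [^] p ^ s \<otimes> (y \<otimes> d)"
    using centralizer_commute[OF y d] c by (simp add: m_assoc)
  also have "\<dots> = y \<otimes> (g [^] p ^ s \<otimes> d)"
    using gy c by (simp flip: m_assoc)
  finally show ?thesis .
qed

lemma exists_conj_a_eq_mult_pow:
  assumes eD: "e \<in> D"
  shows "\<exists>d\<in>D. a \<otimes> d \<otimes> inv a = d \<otimes> e [^] p ^ s"
proof -
  have ec: "e \<in> carrier G"
    using D.mem_carrier[OF eD] .
  have "coprime u (p ^ m)"
    using not_dvd_u prime_p by (simp add: prime_imp_coprime coprime_commute)
  then obtain u' where u': "[u * u' = 1] (mod p ^ m)"
    using cong_solve_coprime_nat[of u "p ^ m"] by auto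
  define d where "d = e [^] u'"
  have dD: "d \<in> D"
    unfolding d_def using subgroup_nat_pow_closed[OF D.subgroup_axioms eD] .
  have "[u' + p ^ s * (u * u') = u' + p ^ s * 1] (mod p ^ m)"
    using cong_scalar_left[OF u', of "p ^ s"] by (simp only: cong_add_lcancel_nat)
  then have cong: "[u' * (1 + p ^ s * u) = u' + p ^ s] (mod p ^ m)"
    by (simp add: algebra_simps)
  have "a \<otimes> d \<otimes> inv a = d [^] conj_exp a"
    by (rule conj_eq_pow_conj_exp[OF a_carrier dD])
  also have "\<dots> = e [^] (u' * (1 + p ^ s * u))"
    unfolding d_def conj_exp_a using ec by (simp only: nat_pow_pow)
  also have "\<dots> = e [^] (u' + p ^ s)"
    by (rule derived_nat_pow_cong[OF eD cong])
  also have "\<dots> = d \<otimes> e [^] p ^ s"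
    unfolding d_def using ec by (simp add: nat_pow_mult)
  finally show ?thesis
    using dD by blast
qed

lemma pow_in_center_mult_derived:
  assumes g: "g \<in> C"
  shows "g [^] p ^ s \<in> Z <#> D"
proof -
  define e where "e = commutator a g"
  have gc: "g \<in> carrier G"
    using C.mem_carrier[OF g] .
  have eD: "e \<in> D" and ec: "e \<in> carrier G"
    unfolding e_def using commutator_in_derived[OF a_carrier gc] a_carrier gc by auto
  obtain d where dD: "d \<in> D" and conj_d: "a \<otimes> d \<otimes> inv a = d \<otimes> e [^] p ^ s"
    using exists_conj_a_eq_mult_pow[OF eD] by blast
  have dc: "d \<in> carrier G"
    using D.mem_carrier[OF dD] .
  define z where "z = g [^] p ^ s \<otimes> inv d"
  have zc: "z \<in> carrier G"
    unfolding z_def using gc dc by simp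
  have "e [^] p ^ s \<otimes> g = g \<otimes> e [^] p ^ s"
    using group_commutes_pow[OF centralizer_commute[OF g eD, symmetric] ec gc] .
  then have eg: "e [^] p ^ s \<otimes> g [^] p ^ s = g [^] p ^ s \<otimes> e [^] p ^ s"
    using group_commutes_pow[OF _ gc, of "e [^] p ^ s" "p ^ s"] ec by simp
  have "a \<otimes> z \<otimes> inv a = (a \<otimes> g [^] p ^ s \<otimes> inv a) \<otimes> inv (a \<otimes> d \<otimes> inv a)"
    unfolding z_def using a_carrier gc dc by (simp add: m_assoc inv_mult_group)
  also have "\<dots> = (g [^] p ^ s \<otimes> e [^] p ^ s) \<otimes> (inv (e [^] p ^ s) \<otimes> inv d)"
    unfolding conj_nat_pow_centralizer[OF a_carrier g] e_def[symmetric] conj_d eg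
    using dc ec by (simp add: inv_mult_group)
  also have "\<dots> = z"
    unfolding z_def using dc ec gc by (simp add: m_assoc)
  finally have za: "z \<otimes> a = a \<otimes> z"
    using conj_eq_self_iff[OF a_carrier zc] by simp
  have zy: "z \<otimes> y = y \<otimes> z" if y: "y \<in> C" for y
    unfolding z_def by (rule pow_mult_derived_commutes_centralizer[OF g D.m_inv_closed[OF dD] y])
  have "z \<in> Z"
    by (rule in_center_if_commutes[OF zc za zy])
  moreover have "g [^] p ^ s = z \<otimes> d"
    unfolding z_def using gc dc by (simp add: m_assoc)
  ultimately show ?thesis
    unfolding set_mult_def using dD by blast
qed

lemma commutator_pow_eq_one:
  assumes g: "g \<in> carrier G" "g [^] p ^ s \<in> Z <#> D" and x: "x \<in> C"
  shows "commutator g x [^] p ^ s = \<one>"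
proof -
  have xc: "x \<in> carrier G"
    using C.mem_carrier[OF x] .
  obtain z d where z: "z \<in> Z" and d: "d \<in> D" and gzd: "g [^] p ^ s = z \<otimes> d"
    using g(2) unfolding set_mult_def by blast
  have zc: "z \<in> carrier G" and dc: "d \<in> carrier G"
    using z d D.mem_carrier Z.mem_carrier by auto
  have zx: "z \<otimes> x = x \<otimes> z"
    using z xc unfolding center_def by blast
  have "z \<otimes> d \<otimes> x = z \<otimes> (x \<otimes> d)"
    using centralizer_commute[OF x d] zc dc xc by (simp add: m_assoc)
  also have "\<dots> = x \<otimes> (z \<otimes> d)"
    using zx zc dc xc by (simp flip: m_assoc)
  finally have zdx: "z \<otimes> d \<otimes> x = x \<otimes> (z \<otimes> d)" .
  have "commutator (g [^] p ^ s) x = \<one>"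
    unfolding gzd using zc dc xc zdx by (intro commutator_eq_one_iff[THEN iffD2]) auto
  then have "commutator g x [^] geom_sum (conj_exp g) (p ^ s) = \<one>"
    unfolding commutator_nat_pow_left[OF g(1) xc] .
  moreover obtain w where w: "geom_sum (conj_exp g) (p ^ s) = p ^ s * w" "\<not> p dvd w"
    using geom_sum_prime_power_exact[OF prime_p odd_p conj_exp_cong_one[OF m_pos g(1)]] by blast
  ultimately have "commutator g x [^] (p ^ s * w) = \<one>"
    by simp
  moreover obtain j where "ord (commutator g x) = p ^ j"
    using ord_derived[OF commutator_in_derived[OF g(1) xc]] by blast
  moreover have "commutator g x \<in> carrier G"
    using g(1) xc by simp
  ultimately show ?thesis
    using nat_pow_eq_one_of_coprime[OF _ _ prime_p w(2)] by blast
qed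

lemma a_pow_in_centralizer_if:
  assumes x: "x \<in> C" "ord (commutator a x) = p ^ m"
    and one: "commutator (a [^] i) x [^] p ^ s = \<one>"
  shows "a [^] (i::nat) \<in> C"
proof -
  define c where "c = commutator a x"
  define k where "k = geom_sum (conj_exp a) i"
  have xc: "x \<in> carrier G" and cc: "c \<in> carrier G"
    unfolding c_def using C.mem_carrier[OF x(1)] a_carrier by auto
  have "c [^] (k * p ^ s) = \<one>"
    using one unfolding c_def k_def commutator_nat_pow_left[OF a_carrier xc]
    using a_carrier xc by (simp add: nat_pow_pow)
  then have "p ^ m dvd k * p ^ s"
    using pow_eq_id[OF cc] x(2) unfolding c_def by simp
  moreover have "conj_exp a ^ i - 1 = k * p ^ s * u"
    unfolding power_minus_one_eq_geom_sum k_def using conj_exp_a by simp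
  ultimately have "p ^ m dvd conj_exp a ^ i - 1"
    by simp
  then have "[conj_exp a ^ i = 1] (mod p ^ m)"
    using conj_exp_a by (simp add: cong_altdef_nat)
  then show ?thesis
    using nat_pow_in_centralizer_iff[OF a_carrier] by blast
qed

lemma in_centralizer_if_pow:
  assumes g: "g \<in> carrier G" "g [^] p ^ s \<in> Z <#> D"
  shows "g \<in> C"
proof -
  obtain x where x: "x \<in> C" and ord_c: "ord (commutator a x) = p ^ m"
    using exists_commutator_generator by blast
  obtain i :: nat and y where y: "y \<in> C" and gy: "g = a [^] i \<otimes> y"
    using carrier_decomp[OF g(1)] by blast
  define A where "A = a [^] i"
  define f where "f = commutator y x"
  have c: "A \<in> carrier G" "x \<in> carrier G" "y \<in> carrier G"
    unfolding A_def using a_carrier C.mem_carrier x y by auto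
  have f: "f \<in> D \<inter> Z"
    unfolding f_def by (rule commutator_centralizer_in_derived_center[OF y x])
  have fc: "f \<in> carrier G"
    using f D.mem_carrier by blast
  have "A \<otimes> f = f \<otimes> A"
    using f c(1) unfolding center_def by auto
  then have "A \<otimes> f \<otimes> inv A = f"
    using conj_eq_self_iff[OF c(1) fc] by blast
  moreover have "commutator g x = A \<otimes> f \<otimes> inv A \<otimes> commutator A x"
    unfolding gy A_def[symmetric] f_def by (rule commutator_mult_left[OF c(1,3,2)])
  ultimately have e: "commutator g x = f \<otimes> commutator A x"
    by simp
  have "commutator A x = inv f \<otimes> commutator g x"
    unfolding e using fc c by (simp flip: m_assoc)
  then have "commutator A x [^] p ^ s = inv f [^] p ^ s \<otimes> commutator g x [^] p ^ s"
    using pow_mult_distrib[OF derived_commute] D.m_inv_closed commutator_in_derived f g(1) c(2) fc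
    by (metis IntD1 inv_closed m_closed)
  also have "\<dots> = \<one>"
    using f commutator_pow_eq_one[OF g x] fc unfolding derived_inter_center by (simp add: nat_pow_inv)
  finally have "A \<in> C"
    unfolding A_def by (rule a_pow_in_centralizer_if[OF x ord_c])
  then show ?thesis
    unfolding gy A_def[symmetric] using y by (rule C.m_closed)
qed

lemma centralizer_eq: "C = {g \<in> carrier G. g [^] p ^ s \<in> Z <#> D}"
  using pow_in_center_mult_derived in_centralizer_if_pow C.mem_carrier by blast

end

section \<open>The centralizer of the derived subgroup\<close>

context pgroup_cyclic_derived
begin

lemma m_pos_if_centralizer_ne_carrier:
  assumes "C \<noteq> carrier G"
  shows "0 < m"
proof (rule ccontr)
  assume "\<not> 0 < m"
  then have "h \<in> C" if "h \<in> carrier G" for h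
    using in_centralizer_iff[OF that] by simp
  then show False
    using assms C.subset by blast
qed

lemma conj_exp_decompose:
  assumes m: "0 < m" and h: "h \<in> carrier G" and ne: "conj_exp h \<noteq> 1"
  obtains u where "conj_exp h = 1 + p ^ multiplicity p (conj_exp h - 1) * u" "\<not> p dvd u"
    "0 < multiplicity p (conj_exp h - 1)" "multiplicity p (conj_exp h - 1) < m"
proof -
  define s where "s = multiplicity p (conj_exp h - 1)"
  have "conj_exp h - 1 \<noteq> 0" "\<not> is_unit p"
    using ne conj_exp_ge_one[OF m h] one_less_p by auto
  then obtain u where u: "conj_exp h - 1 = p ^ s * u" and not_dvd_u: "\<not> p dvd u"
    unfolding s_def by (rule multiplicity_decompose')
  have "p dvd conj_exp h - 1"
    using conj_exp_cong_one[OF m h] conj_exp_ge_one[OF m h] by (simp add: cong_altdef_nat)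
  then have "0 < s"
    using u not_dvd_u by (cases s) auto
  moreover have "p ^ s < p ^ m"
    using u not_dvd_u conj_exp_less[OF h] by (cases u) auto
  then have "s < m"
    by (rule power_less_imp_less_exp[OF one_less_p])
  moreover have "conj_exp h = 1 + p ^ s * u"
    using u conj_exp_ge_one[OF m h] by simp
  ultimately show ?thesis
    using that not_dvd_u unfolding s_def by blast
qed

lemma exists_nontrivial_conj_action:
  assumes "C \<noteq> carrier G"
  shows "\<exists>a s u. nontrivial_conj_action G p m a s u"
proof -
  have m: "0 < m"
    using m_pos_if_centralizer_ne_carrier[OF assms] .
  define P where "P h \<longleftrightarrow> h \<in> carrier G \<and> conj_exp h \<noteq> 1" for h
  obtain h0 where "h0 \<in> carrier G" "h0 \<notin> C"
    using assms C.subset by blast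
  then have "P h0"
    unfolding P_def using in_centralizer_iff by auto
  then obtain a where Pa: "P a"
    and least: "\<And>h. P h \<Longrightarrow> multiplicity p (conj_exp a - 1) \<le> multiplicity p (conj_exp h - 1)"
    using ex_has_least_nat[of P h0 "\<lambda>h. multiplicity p (conj_exp h - 1)"] by blast
  define s where "s = multiplicity p (conj_exp a - 1)"
  have a: "a \<in> carrier G"
    using Pa unfolding P_def by blast
  obtain u where "conj_exp a = 1 + p ^ s * u" "\<not> p dvd u" "0 < s" "s < m"
    using conj_exp_decompose[OF m a] Pa unfolding P_def s_def by blast
  moreover have "[conj_exp h = 1] (mod p ^ s)" if h: "h \<in> carrier G" for h
  proof (cases "conj_exp h = 1")
    case False
    then have "s \<le> multiplicity p (conj_exp h - 1)"
      using least h unfolding s_def P_def by blast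
    then have "p ^ s dvd conj_exp h - 1"
      by (rule multiplicity_dvd')
    then show ?thesis
      using conj_exp_ge_one[OF m h] by (simp add: cong_altdef_nat)
  qed simp
  ultimately have "nontrivial_conj_action G p m a s u"
    using a pgroup_cyclic_derived_axioms
    by (simp add: nontrivial_conj_action_def nontrivial_conj_action_axioms_def)
  then show ?thesis
    by blast
qed

lemma derived_subset_center_if_centralizer_eq_carrier:
  assumes CG: "C = carrier G"
  shows "D \<subseteq> Z"
proof
  fix d assume d: "d \<in> D"
  have "d \<otimes> g = g \<otimes> d" if g: "g \<in> carrier G" for g
    using centralizer_commute[of g d] g d unfolding CG by simp
  then show "d \<in> Z"
    using D.mem_carrier[OF d] unfolding center_def by blast
qed

lemma pow_in_center_if_centralizer_eq_carrier:
  assumes CG: "C = carrier G" and g: "g \<in> carrier G"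
  shows "g [^] p ^ m \<in> Z"
proof -
  have "g [^] p ^ m \<otimes> h = h \<otimes> g [^] p ^ m" if h: "h \<in> carrier G" for h
  proof -
    have w: "commutator g h \<in> D"
      using commutator_in_derived[OF g h] .
    have "g \<otimes> commutator g h = commutator g h \<otimes> g"
      using subsetD[OF derived_subset_center_if_centralizer_eq_carrier[OF CG] w] g
      unfolding center_def by auto
    then have "commutator (g [^] p ^ m) h = commutator g h [^] p ^ m"
      by (rule commutator_nat_pow_left_of_commute[OF g h])
    also have "\<dots> = \<one>"
      by (rule derived_pow_card[OF w])
    finally show ?thesis
      using g h by (simp add: commutator_eq_one_iff)
  qed
  then show ?thesis
    using g unfolding center_def by auto
qed

lemma centralizer_structure:
  "\<exists>s. card (D \<inter> Z) = p ^ s \<and> C = {g \<in> carrier G. g [^] p ^ s \<in> Z <#> D}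
     \<and> derived G C = mho G p (m - s) D"
proof (cases "C = carrier G")
  case True
  have "D \<inter> Z = D"
    using derived_subset_center_if_centralizer_eq_carrier[OF True] by blast
  then have "card (D \<inter> Z) = p ^ m"
    by (simp add: card_derived)
  moreover have "g [^] p ^ m \<in> Z <#> D" if g: "g \<in> carrier G" for g
  proof -
    have "g [^] p ^ m = g [^] p ^ m \<otimes> \<one>"
      using g by simp
    then show ?thesis
      unfolding set_mult_def using pow_in_center_if_centralizer_eq_carrier[OF True g] D.one_closed
      by blast
  qed
  then have "C = {g \<in> carrier G. g [^] p ^ m \<in> Z <#> D}"
    unfolding True by blast
  moreover have "mho G p (m - m) D = {d \<in> D. d [^] p ^ m = \<one>}"
    by (rule mho_derived) simp
  then have "derived G C = mho G p (m - m) D"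
    unfolding True using derived_pow_card by blast
  ultimately show ?thesis
    by blast
next
  case False
  then obtain a s u where "nontrivial_conj_action G p m a s u"
    using exists_nontrivial_conj_action by blast
  then interpret nontrivial_conj_action G p m a s u .
  have "derived G C = mho G p (m - s) D"
    unfolding derived_centralizer mho_eq_derived_inter_center ..
  then show ?thesis
    using card_derived_inter_center centralizer_eq by blast
qed

end

theorem lemma4p1:
  fixes G :: "('a, 'b) monoid_scheme" and p m t :: nat
  assumes "group G"
    and "Factorial_Ring.prime p" and "odd p"
    and "finite (carrier G)" and "\<exists>k. card (carrier G) = p ^ k"
    and "cyclic_group (subgroup_generated G (derived G (carrier G)))"
    and "card (derived G (carrier G)) = p ^ m"
    and "card (derived G (carrier G) \<inter> center G) = p ^ t"
  shows "centralizer G (derived G (carrier G)) =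
           {g \<in> carrier G. g [^]\<^bsub>G\<^esub> (p ^ t) \<in> center G <#>\<^bsub>G\<^esub> derived G (carrier G)}
         \<and> derived G (centralizer G (derived G (carrier G))) = mho G p (m - t) (derived G (carrier G))
         \<and> (\<forall>N. subgroup N G \<longrightarrow> N \<subseteq> centralizer G (derived G (carrier G)) \<longrightarrow>
           group_exponent G N = p ^ (LEAST n. jennings G p N (p ^ n) = {\<one>\<^bsub>G\<^esub>}))"
proof -
  interpret pgroup_cyclic_derived G p m
    using assms by (simp add: pgroup_cyclic_derived_def pgroup_cyclic_derived_axioms_def)
  obtain s where s: "card (D \<inter> Z) = p ^ s"
    "C = {g \<in> carrier G. g [^]\<^bsub>G\<^esub> p ^ s \<in> Z <#>\<^bsub>G\<^esub> D}"
    "derived G C = mho G p (m - s) D"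
    using centralizer_structure by blast
  have "t = s"
    using assms(8) s(1) one_less_p by (simp add: power_inject_exp)
  then show ?thesis
    using s group_exponent_eq_jennings by blast
qed

end
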